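(* Consider the scalar Gaussian wiretap channel with amplitude constraint $\mathsf{R}>0$ and $0<\sigma_1^2<\sigma_2^2$, let $X^\star$ be a secrecy-capacity-achieving input, and let $\breve{h}:\mathbb{C}\to\mathbb{C}$ be the complex extension (defined in the context) of the function $h(y)=\sigma_1^2 f_{Y_1}(y)g'(y)$. Then for every \[ \mathsf{B} \ge \mathsf{R} \frac{\sigma_2^2+\sigma_1^2}{ \sigma_2^2-\sigma_1^2}, \] we have \[ \max_{|z|\le \mathsf{B}} |\breve{h}(z)| \ge \left( c_1 \mathsf{B} - c_2 \mathsf{R} \right) \frac{ \exp\left( -\frac{(\mathsf{B}+\mathsf{R})^2}{2\sigma_1^2} \right) }{\sqrt{2\pi \sigma_1^2}} , \] where $c_1=1-\frac{\sigma_1^2 }{\sigma_2^2}$ and $c_2=1 + \frac{\sigma_1^2 }{\sigma_2^2}$.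
   Context: Scalar Gaussian wiretap channel: $Y_i=X+N_i$, $N_i\sim\mathcal{N}(0,\sigma_i^2)$, $i=1,2$, mutually independent with $X$. $C_s(\sigma_1^2,\sigma_2^2,\mathsf{R},1)=\max I(X;Y_1)-I(X;Y_2)$ over distributions of $X$ on $[-\mathsf{R},\mathsf{R}]$; $X^\star$ is a maximizer. $\phi_\sigma(w)=\frac{1}{\sqrt{2\pi\sigma^2}}e^{-w^2/(2\sigma^2)}$, and $f_{Y_i}(w)=\mathbb{E}[\phi_{\sigma_i}(w-X^\star)]$. $N\sim\mathcal{N}(0,\sigma_2^2-\sigma_1^2)$ independent of $X^\star$. $g(y)=\mathbb{E}\left[\log\frac{f_{Y_2}(y+N)}{f_{Y_1}(y)}\right]$ and $h(y)=\sigma_1^2 f_{Y_1}(y)g'(y)$, which equals $\sigma_1^2 f_{Y_1}(y)\left(\frac{\mathbb{E}_N[\mathbb{E}[X^\star|Y_2=y+N]]-y}{\sigma_2^2}-\frac{\mathbb{E}[X^\star|Y_1=y]-y}{\sigma_1^2}\right)$ and also $\frac{\sigma_1^2 f_{Y_1}(y)\mathbb{E}[N\log f_{Y_2}(y+N)]}{\sigma_2^2-\sigma_1^2}-\mathbb{E}[X^\star\phi_{\sigma_1}(y-X^\star)]+y f_{Y_1}(y)$. The complex extension $\breve{h}(z)$ is obtained by replacing $y$ by $z\in\mathbb{C}$ in this last expression, with $\phi_\sigma$ and $f_{Y_i}$ extended to complex arguments by the same formulas and $\log$ the principal branch. *)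

theory Defs
  imports "HOL-Probability.Probability"
begin

text \<open>Gaussian channel Y = X + N with X ~ P, N ~ N(0,v) independent (v = variance).
  The underlying space carries the pair (X, N).\<close>
definition gauss_chan :: "real measure \<Rightarrow> real \<Rightarrow> (real \<times> real) measure" where
  "gauss_chan P v = P \<Otimes>\<^sub>M density lborel (normal_density 0 (sqrt v))"

definition chan_MI :: "real measure \<Rightarrow> real \<Rightarrow> real" where
  "chan_MI P v = prob_space.mutual_information (gauss_chan P v) (exp 1) borel borel fst (\<lambda>(x, n). x + n)"

definition input_dist :: "real \<Rightarrow> real measure \<Rightarrow> bool" where
  "input_dist R P \<longleftrightarrow> prob_space P \<and> sets P = sets borel \<and> measure P {-R..R} = 1"

definition secrecy_obj :: "real \<Rightarrow> real \<Rightarrow> real measure \<Rightarrow> real" where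
  "secrecy_obj v1 v2 P = chan_MI P v1 - chan_MI P v2"

definition secrecy_optimal :: "real \<Rightarrow> real \<Rightarrow> real \<Rightarrow> real measure \<Rightarrow> bool" where
  "secrecy_optimal R v1 v2 P \<longleftrightarrow> input_dist R P \<and>
     (\<forall>Q. input_dist R Q \<longrightarrow> secrecy_obj v1 v2 Q \<le> secrecy_obj v1 v2 P)"

definition phi_c :: "real \<Rightarrow> complex \<Rightarrow> complex" where
  "phi_c v w = exp (- (w ^ 2) / (2 * of_real v)) / of_real (sqrt (2 * pi * v))"

definition fY_c :: "real measure \<Rightarrow> real \<Rightarrow> complex \<Rightarrow> complex" where
  "fY_c P v w = (\<integral>x. phi_c v (w - of_real x) \<partial>P)"

text \<open>Complex extension of h(y) (last expression in the context), with
  N ~ N(0, v2 - v1) and principal logarithm Ln.\<close>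
definition h_breve :: "real measure \<Rightarrow> real \<Rightarrow> real \<Rightarrow> complex \<Rightarrow> complex" where
  "h_breve P v1 v2 z =
     of_real v1 * fY_c P v1 z
       * (\<integral>w. of_real (normal_density 0 (sqrt (v2 - v1)) w * w) * Ln (fY_c P v2 (z + of_real w)) \<partial>lborel)
       / of_real (v2 - v1)
     - (\<integral>x. of_real x * phi_c v1 (z - of_real x) \<partial>P)
     + z * fY_c P v1 z"

end

theory Submission
  imports Defs
begin

(* Evaluate h at the real point z = B, where all logarithms are real. Since |X| <= R, shifting
   the argument of the output density f_Y2 by w changes log f_Y2 by the Gaussian quadratic term
   -(2Bw + w^2)/(2 v2) up to an error R|w|/v2. Averaging against N ~ N(0, v2 - v1), whose odd
   moments vanish, gives E[N log f_Y2(B + N)] = -B (v2 - v1)/v2 up to R (v2 - v1)/v2. Together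
   with |E[X phi(B - X)]| <= R f_Y1(B) this yields h(B) >= (c1 B - c2 R) f_Y1(B), and
   f_Y1(B) >= phi(B + R). *)

lemma phi_c_of_real:
  assumes "v > 0"
  shows "phi_c v (of_real y) = of_real (normal_density 0 (sqrt v) y)"
proof -
  have "exp (- ((of_real y) ^ 2) / (2 * of_real v)) = (of_real (exp (- (y ^ 2) / (2 * v))) :: complex)"
    by (simp flip: exp_of_real)
  then show ?thesis
    using assms by (simp add: phi_c_def normal_density_def)
qed

lemma normal_density_antimono:
  assumes "\<bar>x\<bar> \<le> \<bar>y\<bar>"
  shows "normal_density 0 \<sigma> y \<le> normal_density 0 \<sigma> x"
proof -
  have "x\<^sup>2 \<le> y\<^sup>2"
    using assms by (simp add: abs_le_square_iff)
  then have "- y\<^sup>2 / (2 * \<sigma>\<^sup>2) \<le> - x\<^sup>2 / (2 * \<sigma>\<^sup>2)"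
    by (simp add: divide_right_mono)
  then show ?thesis
    unfolding normal_density_def by (intro mult_left_mono) auto
qed

lemma normal_density_le_center: "normal_density 0 \<sigma> x \<le> normal_density 0 \<sigma> 0"
  by (rule normal_density_antimono) simp

lemma normal_density_shift:
  "normal_density 0 \<sigma> (u + w - x) =
     exp (- (2 * u * w + w\<^sup>2) / (2 * \<sigma>\<^sup>2)) * (normal_density 0 \<sigma> (u - x) * exp (x * w / \<sigma>\<^sup>2))"
proof -
  have exponent: "- (u + w - x)\<^sup>2 / (2 * \<sigma>\<^sup>2) = - (2 * u * w + w\<^sup>2) / (2 * \<sigma>\<^sup>2) + (- (u - x)\<^sup>2 / (2 * \<sigma>\<^sup>2) + x * w / \<sigma>\<^sup>2)"
    by (cases "\<sigma> = 0") (simp_all add: field_simps power2_eq_square)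
  show ?thesis
    unfolding normal_density_def diff_zero exponent exp_add by (simp add: ac_simps)
qed

lemma integral_mult_exp_bounds:
  fixes k g :: "'a \<Rightarrow> real"
  assumes k: "integrable M k" and k_nonneg: "AE x in M. 0 \<le> k x"
    and g[measurable]: "g \<in> borel_measurable M" and g_bounded: "AE x in M. \<bar>g x\<bar> \<le> c"
  shows integral_mult_exp_ge: "exp (- c) * (\<integral>x. k x \<partial>M) \<le> (\<integral>x. k x * exp (g x) \<partial>M)"
    and integral_mult_exp_le: "(\<integral>x. k x * exp (g x) \<partial>M) \<le> exp c * (\<integral>x. k x \<partial>M)"
proof -
  have [measurable]: "k \<in> borel_measurable M"
    using k by (rule borel_measurable_integrable)
  have exp_bounds: "AE x in M. exp (- c) * k x \<le> k x * exp (g x) \<and> k x * exp (g x) \<le> exp c * k x"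
    using k_nonneg g_bounded
  proof eventually_elim
    case (elim x)
    then have "exp (- c) \<le> exp (g x)" "exp (g x) \<le> exp c"
      by simp_all
    then show ?case
      using mult_left_mono[OF _ elim(1)] by (metis mult.commute)
  qed
  have integrable: "integrable M (\<lambda>x. k x * exp (g x))"
  proof (rule Bochner_Integration.integrable_bound)
    show "integrable M (\<lambda>x. exp c * k x)"
      using k by simp
    show "AE x in M. norm (k x * exp (g x)) \<le> norm (exp c * k x)"
      using exp_bounds k_nonneg by eventually_elim simp
  qed measurable
  show "exp (- c) * (\<integral>x. k x \<partial>M) \<le> (\<integral>x. k x * exp (g x) \<partial>M)"
    using integral_mono_AE[OF _ integrable, of "\<lambda>x. exp (- c) * k x"] k exp_bounds by simp
  show "(\<integral>x. k x * exp (g x) \<partial>M) \<le> exp c * (\<integral>x. k x \<partial>M)"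
    using integral_mono_AE[OF integrable, of "\<lambda>x. exp c * k x"] k exp_bounds by simp
qed

lemma abs_ln_integral_mult_exp_le:
  fixes k g :: "'a \<Rightarrow> real"
  assumes "integrable M k" "AE x in M. 0 \<le> k x"
    and "g \<in> borel_measurable M" "AE x in M. \<bar>g x\<bar> \<le> c"
    and "0 < (\<integral>x. k x \<partial>M)"
  shows "\<bar>ln (\<integral>x. k x * exp (g x) \<partial>M) - ln (\<integral>x. k x \<partial>M)\<bar> \<le> c"
proof -
  note bounds = integral_mult_exp_ge[OF assms(1-4)] integral_mult_exp_le[OF assms(1-4)]
  have "0 < exp (- c) * (\<integral>x. k x \<partial>M)"
    using assms(5) by simp
  then have "ln (exp (- c) * (\<integral>x. k x \<partial>M)) \<le> ln (\<integral>x. k x * exp (g x) \<partial>M)"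
      and "ln (\<integral>x. k x * exp (g x) \<partial>M) \<le> ln (exp c * (\<integral>x. k x \<partial>M))"
    using bounds by (auto intro!: ln_mono)
  then show ?thesis
    using assms(5) by (simp add: ln_mult)
qed

lemma abs_integral_normal_density_mult_sub_le:
  fixes g :: "real \<Rightarrow> real"
  assumes \<sigma>: "0 < \<sigma>" and g[measurable]: "g \<in> borel_measurable lborel"
    and g_quadratic: "\<And>w. \<bar>g w - (a + b * w + c * w\<^sup>2)\<bar> \<le> K * \<bar>w\<bar>"
  shows "\<bar>(\<integral>w. normal_density 0 \<sigma> w * w * g w \<partial>lborel) - b * \<sigma>\<^sup>2\<bar> \<le> K * \<sigma>\<^sup>2"
proof -
  let ?\<psi> = "normal_density 0 \<sigma>"
  define r where "r w = g w - (a + b * w + c * w\<^sup>2)" for w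
  have moment1: "has_bochner_integral lborel (\<lambda>w. ?\<psi> w * w) 0"
    by (rule normal_moment_nz_1[OF \<sigma>])
  have moment2: "has_bochner_integral lborel (\<lambda>w. ?\<psi> w * w\<^sup>2) (\<sigma>\<^sup>2)"
    using normal_moment_even[OF \<sigma>, of 0 1] \<sigma> by simp
  have moment3: "has_bochner_integral lborel (\<lambda>w. ?\<psi> w * w ^ 3) 0"
    using normal_moment_odd[OF \<sigma>, of 0 1] by (simp add: numeral_3_eq_3)
  have r_bound: "\<bar>?\<psi> w * w * r w\<bar> \<le> K * (?\<psi> w * w\<^sup>2)" for w
  proof -
    have "\<bar>?\<psi> w * w * r w\<bar> = ?\<psi> w * \<bar>w\<bar> * \<bar>r w\<bar>"
      by (simp add: abs_mult)
    also have "\<dots> \<le> ?\<psi> w * \<bar>w\<bar> * (K * \<bar>w\<bar>)"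
      unfolding r_def by (intro mult_left_mono g_quadratic) simp_all
    finally show ?thesis
      by (simp add: power2_eq_square abs_mult_self ac_simps)
  qed
  have r_integrable: "integrable lborel (\<lambda>w. ?\<psi> w * w * r w)"
  proof (rule Bochner_Integration.integrable_bound)
    show "integrable lborel (\<lambda>w. K * (?\<psi> w * w\<^sup>2))"
      using moment2 by (simp add: has_bochner_integral_iff)
    show "AE w in lborel. norm (?\<psi> w * w * r w) \<le> norm (K * (?\<psi> w * w\<^sup>2))"
      using r_bound by (auto intro: order_trans[OF _ abs_ge_self])
  qed (simp add: r_def)
  have "has_bochner_integral lborel
      (\<lambda>w. a * (?\<psi> w * w) + b * (?\<psi> w * w\<^sup>2) + c * (?\<psi> w * w ^ 3) + ?\<psi> w * w * r w)
      (a * 0 + b * \<sigma>\<^sup>2 + c * 0 + (\<integral>w. ?\<psi> w * w * r w \<partial>lborel))"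
    by (intro has_bochner_integral_add has_bochner_integral_mult_right moment1 moment2 moment3
        has_bochner_integral_integrable r_integrable)
  moreover have "a * (?\<psi> w * w) + b * (?\<psi> w * w\<^sup>2) + c * (?\<psi> w * w ^ 3) + ?\<psi> w * w * r w
      = ?\<psi> w * w * g w" for w
    by (simp add: r_def algebra_simps power2_eq_square power3_eq_cube)
  ultimately have "(\<integral>w. ?\<psi> w * w * g w \<partial>lborel) - b * \<sigma>\<^sup>2 = (\<integral>w. ?\<psi> w * w * r w \<partial>lborel)"
    by (simp add: has_bochner_integral_iff)
  also have "\<bar>\<dots>\<bar> \<le> (\<integral>w. K * (?\<psi> w * w\<^sup>2) \<partial>lborel)"
    using r_bound moment2 by (intro integral_abs_bound_integral r_integrable) (simp_all add: has_bochner_integral_iff)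
  also have "\<dots> = K * \<sigma>\<^sup>2"
    using moment2 by (simp add: has_bochner_integral_iff)
  finally show ?thesis .
qed

definition out_density :: "real measure \<Rightarrow> real \<Rightarrow> real \<Rightarrow> real" where
  "out_density P \<sigma> y = (\<integral>x. normal_density 0 \<sigma> (y - x) \<partial>P)"

lemma fY_c_of_real:
  assumes "v > 0"
  shows "fY_c P v (of_real y) = of_real (out_density P (sqrt v) y)"
  using assms by (simp add: fY_c_def out_density_def phi_c_of_real flip: of_real_diff)

locale bounded_input = prob_space P for P :: "real measure" +
  fixes R :: real
  assumes sets_P[measurable_cong]: "sets P = sets borel"
    and AE_bounded: "AE x in P. \<bar>x\<bar> \<le> R"
begin

lemma integrable_normal_density_diff: "integrable P (\<lambda>x. normal_density 0 \<sigma> (y - x))"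
  by (rule integrable_const_bound[where B = "normal_density 0 \<sigma> 0"])
    (simp_all add: normal_density_le_center)

lemma integrable_mult_normal_density_diff: "integrable P (\<lambda>x. x * normal_density 0 \<sigma> (y - x))"
proof (rule Bochner_Integration.integrable_bound)
  show "integrable P (\<lambda>x. R * normal_density 0 \<sigma> (y - x))"
    using integrable_normal_density_diff by simp
  show "AE x in P. norm (x * normal_density 0 \<sigma> (y - x)) \<le> norm (R * normal_density 0 \<sigma> (y - x))"
    using AE_bounded by eventually_elim (simp add: abs_mult mult_right_mono)
qed simp

lemma out_density_ge:
  "normal_density 0 \<sigma> (\<bar>y\<bar> + R) \<le> out_density P \<sigma> y"
proof -
  have "(\<integral>x. normal_density 0 \<sigma> (\<bar>y\<bar> + R) \<partial>P) \<le> out_density P \<sigma> y"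
    unfolding out_density_def
    using AE_bounded
    by (intro integral_mono_AE integrable_normal_density_diff)
      (auto elim!: eventually_mono intro!: normal_density_antimono)
  then show ?thesis
    by (simp add: prob_space)
qed

lemma out_density_pos: "0 < \<sigma> \<Longrightarrow> 0 < out_density P \<sigma> y"
  using out_density_ge[of \<sigma> y] normal_density_pos[of \<sigma> 0 "\<bar>y\<bar> + R"] by linarith

lemma abs_integral_mult_normal_density_le:
  "\<bar>\<integral>x. x * normal_density 0 \<sigma> (y - x) \<partial>P\<bar> \<le> R * out_density P \<sigma> y"
proof -
  have "\<bar>\<integral>x. x * normal_density 0 \<sigma> (y - x) \<partial>P\<bar> \<le> (\<integral>x. \<bar>x * normal_density 0 \<sigma> (y - x)\<bar> \<partial>P)"
    by (rule integral_abs_bound)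
  also have "\<dots> \<le> (\<integral>x. R * normal_density 0 \<sigma> (y - x) \<partial>P)"
    using AE_bounded
    by (intro integral_mono_AE integrable_abs integrable_mult_normal_density_diff integrable_mult_right
        integrable_normal_density_diff)
      (auto elim!: eventually_mono simp: abs_mult mult_right_mono)
  finally show ?thesis
    by (simp add: out_density_def)
qed

lemma borel_measurable_out_density[measurable]: "out_density P \<sigma> \<in> borel_measurable borel"
  unfolding out_density_def by measurable

lemma ln_out_density_shift:
  assumes \<sigma>: "0 < \<sigma>"
  shows "\<bar>ln (out_density P \<sigma> (u + w)) - (ln (out_density P \<sigma> u) - u / \<sigma>\<^sup>2 * w - 1 / (2 * \<sigma>\<^sup>2) * w\<^sup>2)\<bar>
    \<le> R / \<sigma>\<^sup>2 * \<bar>w\<bar>"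
proof -
  let ?e = "- (2 * u * w + w\<^sup>2) / (2 * \<sigma>\<^sup>2)"
  define I where "I = (\<integral>x. normal_density 0 \<sigma> (u - x) * exp (x * w / \<sigma>\<^sup>2) \<partial>P)"
  have shift: "out_density P \<sigma> (u + w) = exp ?e * I"
    unfolding out_density_def I_def normal_density_shift by (rule integral_mult_right_zero)
  then have "0 < I"
    using out_density_pos[OF \<sigma>, of "u + w"] by (simp add: zero_less_mult_iff)
  then have ln_shift: "ln (out_density P \<sigma> (u + w)) = ?e + ln I"
    unfolding shift by (simp add: ln_mult)
  have "\<bar>ln I - ln (out_density P \<sigma> u)\<bar> \<le> R * \<bar>w\<bar> / \<sigma>\<^sup>2"
    unfolding I_def out_density_def
  proof (rule abs_ln_integral_mult_exp_le)
    show "AE x in P. \<bar>x * w / \<sigma>\<^sup>2\<bar> \<le> R * \<bar>w\<bar> / \<sigma>\<^sup>2"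
      using AE_bounded by eventually_elim (simp add: abs_mult divide_right_mono mult_right_mono)
    show "0 < (\<integral>x. normal_density 0 \<sigma> (u - x) \<partial>P)"
      using out_density_pos[OF \<sigma>] by (simp add: out_density_def)
  qed (simp_all add: integrable_normal_density_diff)
  moreover have "?e = - (u / \<sigma>\<^sup>2 * w) - 1 / (2 * \<sigma>\<^sup>2) * w\<^sup>2"
    using \<sigma> by (simp add: field_simps)
  ultimately show ?thesis
    unfolding ln_shift by simp
qed

end

definition h_real :: "real measure \<Rightarrow> real \<Rightarrow> real \<Rightarrow> real \<Rightarrow> real" where
  "h_real P v1 v2 y =
     v1 * out_density P (sqrt v1) y
       * (\<integral>w. normal_density 0 (sqrt (v2 - v1)) w * w * ln (out_density P (sqrt v2) (y + w)) \<partial>lborel)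
       / (v2 - v1)
     - (\<integral>x. x * normal_density 0 (sqrt v1) (y - x) \<partial>P)
     + y * out_density P (sqrt v1) y"

lemma input_dist_imp_bounded_input:
  assumes "input_dist R P"
  shows "bounded_input P R"
proof -
  have P: "prob_space P" and "sets P = sets borel" and "measure P {-R..R} = 1"
    using assms by (auto simp: input_dist_def)
  moreover have "AE x in P. \<bar>x\<bar> \<le> R"
    using prob_space.AE_prob_1[OF P \<open>measure P {-R..R} = 1\<close>] by eventually_elim (simp add: abs_le_iff)
  ultimately show ?thesis
    by (simp add: bounded_input_def bounded_input_axioms_def)
qed

context bounded_input
begin

lemma h_breve_of_real:
  assumes "0 < v1" "0 < v2"
  shows "h_breve P v1 v2 (of_real y) = of_real (h_real P v1 v2 y)"
proof -
  have "Ln (fY_c P v2 (of_real y + of_real w)) = of_real (ln (out_density P (sqrt v2) (y + w)))" for w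
    using assms out_density_pos[of "sqrt v2" "y + w"] by (simp add: fY_c_of_real Ln_of_real flip: of_real_add)
  moreover have "of_real x * phi_c v1 (of_real y - of_real x) = of_real (x * normal_density 0 (sqrt v1) (y - x))" for x
    using assms by (simp add: phi_c_of_real flip: of_real_diff)
  ultimately show ?thesis
    using assms by (simp add: h_breve_def h_real_def fY_c_of_real flip: of_real_mult)
qed

lemma h_real_ge:
  assumes v1: "0 < v1" and v12: "v1 < v2"
  shows "((1 - v1 / v2) * y - (1 + v1 / v2) * R) * out_density P (sqrt v1) y \<le> h_real P v1 v2 y"
proof -
  define s where "s = v2 - v1"
  have s: "0 < s" and v2: "0 < v2"
    using v1 v12 by (simp_all add: s_def)
  define f where "f = out_density P (sqrt v1) y"
  define A where "A = (\<integral>w. normal_density 0 (sqrt s) w * w * ln (out_density P (sqrt v2) (y + w)) \<partial>lborel)"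
  define T where "T = (\<integral>x. x * normal_density 0 (sqrt v1) (y - x) \<partial>P)"
  have "\<bar>A - (- y / v2) * (sqrt s)\<^sup>2\<bar> \<le> R / v2 * (sqrt s)\<^sup>2"
    unfolding A_def
  proof (rule abs_integral_normal_density_mult_sub_le)
    have "(sqrt v2)\<^sup>2 = v2"
      using v2 by simp
    then show "\<bar>ln (out_density P (sqrt v2) (y + w)) -
        (ln (out_density P (sqrt v2) y) + - y / v2 * w + - 1 / (2 * v2) * w\<^sup>2)\<bar> \<le> R / v2 * \<bar>w\<bar>" for w
      using ln_out_density_shift[of "sqrt v2" y w] v2 by simp
  next
    show "0 < sqrt s"
      using s by simp
  next
    show "(\<lambda>w. ln (out_density P (sqrt v2) (y + w))) \<in> borel_measurable lborel"
      by measurable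
  qed
  then have A: "0 \<le> A + y * s / v2 + R * s / v2"
    using s by (simp add: abs_le_iff)
  have T: "T \<le> R * f"
    using abs_integral_mult_normal_density_le[of "sqrt v1" y] by (simp add: T_def f_def)
  have h_eq: "h_real P v1 v2 y = v1 * f * A / s - T + y * f"
    by (simp add: h_real_def f_def A_def T_def s_def)
  have "h_real P v1 v2 y - ((1 - v1 / v2) * y - (1 + v1 / v2) * R) * f
      = v1 * f / s * (A + y * s / v2 + R * s / v2) + (R * f - T)"
    unfolding h_eq using s v2 by (simp add: field_simps)
  also have "0 \<le> \<dots>"
    using A T v1 s out_density_pos[of "sqrt v1" y] by (simp add: f_def)
  finally show ?thesis
    by (simp add: f_def)
qed

end

theorem lemma9:
  fixes R v1 v2 B :: real and P :: "real measure"
  assumes "R > 0" and "0 < v1" and "v1 < v2"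
    and "secrecy_optimal R v1 v2 P"
    and "B \<ge> R * (v2 + v1) / (v2 - v1)"
  shows "\<exists>z. cmod z \<le> B \<and>
    cmod (h_breve P v1 v2 z) \<ge>
      ((1 - v1 / v2) * B - (1 + v1 / v2) * R) * exp (- ((B + R) ^ 2) / (2 * v1)) / sqrt (2 * pi * v1)"
proof -
  interpret bounded_input P R
    using assms(4) by (simp add: secrecy_optimal_def input_dist_imp_bounded_input)
  define K where "K = (1 - v1 / v2) * B - (1 + v1 / v2) * R"
  have "0 \<le> R * (v2 + v1) / (v2 - v1)"
    using assms(1-3) by simp
  then have B: "0 \<le> B"
    using assms(5) by linarith
  have "R * (v2 + v1) \<le> B * (v2 - v1)"
    using assms(3,5) by (simp add: pos_divide_le_eq)
  moreover have "K = (B * (v2 - v1) - R * (v2 + v1)) / v2"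
    using assms(2,3) by (simp add: K_def field_simps)
  ultimately have K: "0 \<le> K"
    using assms(2,3) by simp
  have "K * normal_density 0 (sqrt v1) (B + R) \<le> K * out_density P (sqrt v1) B"
    using out_density_ge[of "sqrt v1" B] B K by (simp add: mult_left_mono)
  also have "\<dots> \<le> h_real P v1 v2 B"
    using h_real_ge[OF assms(2,3)] by (simp add: K_def)
  also have "\<dots> \<le> cmod (h_breve P v1 v2 (of_real B))"
    using h_breve_of_real[of v1 v2 B] assms(2,3) by simp
  finally show ?thesis
    using B assms(2) by (intro exI[of _ "of_real B"]) (simp add: K_def normal_density_def)
qed

end
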